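(* Let $U=[n,u,E,B]$, with $n(t,x)\in\mathbb{R}$ and $u,E,B(t,x)\in\mathbb{R}^3$, satisfy for all $t\geq0$, $x\in\mathbb{R}^3$ the linear system \begin{equation*} \partial_t n +\gamma \nabla\cdot u =0,\quad \partial_t u+\gamma \nabla n +\beta {E}-\mu\Delta u=0,\quad \partial_t {E} - \nabla \times {B} -\beta u = 0,\quad \partial_t {B} + \nabla \times {E} = 0,\quad \nabla \cdot{E} = -\frac{\beta}{\gamma}n, \ \ \nabla\cdot {B} =0. \end{equation*} Then there is a time-frequency functional $\mathcal{E}(\hat U(t,k))$ (a real-valued function of $k$ and of the value $\hat U(t,k)\in\mathbb{C}^{10}$) and a constant $c>0$ such that \begin{equation*} \mathcal{E}(\hat{U}(t,k))\sim |\hat{U}(t,k)|^2:=|\hat{n}(t,k)|^2+|\hat{u}(t,k)|^2+|\hat{E}(t,k)|^2+|\hat{B}(t,k)|^2 \end{equation*} and \begin{equation*} \partial_t \mathcal{E}(\hat{U}(t,k))+c|\hat{n}(t,k)|^2+c|k|^2 |\hat{u}(t,k)|^2 +c\frac{|k|^2}{(1+|k|^2)^2}|\hat{E}(t,k)|^2+c\frac{|k|^4}{(1+|k|^2)^3}|\hat{B}(t,k)|^2 \leq 0 \end{equation*} for all $t\geq 0$, $k\in \mathbb{R}^3$. In particular, \begin{equation*} \partial_t \mathcal{E}(\hat{U}(t,k))+c \frac{|k|^4}{(1+|k|^2)^3} \mathcal{E}(\hat{U}(t,k))\leq 0 \end{equation*} for all $t\geq 0$, $k\in \mathbb{R}^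3$.
   Context: $\gamma,\beta,\mu>0$ are constants. $\hat f(t,k)=\int_{\mathbb{R}^3}e^{-ik\cdot x}f(t,x)\,dx$ is the Fourier transform in $x$. $A\sim B$ means $cB\le A\le CB$ for constants $0<c\le C$ independent of $t,k$. *)

theory Defs
  imports "HOL-Analysis.Analysis"
begin

text \<open>Fourier-side symbols.  With the convention
  hat f(k) = integral of e^(-i k.x) f(x) dx, the operators act as
  grad -> i k, div -> i k., curl -> i k x, Laplacian -> -|k|^2.\<close>

definition kdot :: "real^3 \<Rightarrow> complex^3 \<Rightarrow> complex" where
  "kdot k v = (\<Sum>i\<in>UNIV. complex_of_real (k$i) * v$i)"

definition kcross :: "real^3 \<Rightarrow> complex^3 \<Rightarrow> complex^3" where
  "kcross k v = (\<chi> i.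
     if i = 1 then complex_of_real (k$2) * v$3 - complex_of_real (k$3) * v$2
     else if i = 2 then complex_of_real (k$3) * v$1 - complex_of_real (k$1) * v$3
     else complex_of_real (k$1) * v$2 - complex_of_real (k$2) * v$1)"

definition kscale :: "real^3 \<Rightarrow> complex \<Rightarrow> complex^3" where
  "kscale k z = (\<chi> i. complex_of_real (k$i) * z)"

definition fourier_system ::
  "real \<Rightarrow> real \<Rightarrow> real \<Rightarrow> (real \<Rightarrow> real^3 \<Rightarrow> complex) \<Rightarrow> (real \<Rightarrow> real^3 \<Rightarrow> complex^3)
   \<Rightarrow> (real \<Rightarrow> real^3 \<Rightarrow> complex^3) \<Rightarrow> (real \<Rightarrow> real^3 \<Rightarrow> complex^3) \<Rightarrow> bool" where
  "fourier_system \<gamma> \<beta> \<mu> nh uh Eh Bh \<longleftrightarrow>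
    (\<forall>t\<ge>0. \<forall>k.
      ((\<lambda>s. nh s k) has_vector_derivative
          (- \<i> * complex_of_real \<gamma> * kdot k (uh t k))) (at t within {0..}) \<and>
      ((\<lambda>s. uh s k) has_vector_derivative
          (- ((\<i> * complex_of_real \<gamma>) *s kscale k (nh t k))
           - complex_of_real \<beta> *s Eh t k
           - complex_of_real (\<mu> * (norm k)\<^sup>2) *s uh t k)) (at t within {0..}) \<and>
      ((\<lambda>s. Eh s k) has_vector_derivative
          (\<i> *s kcross k (Bh t k) + complex_of_real \<beta> *s uh t k)) (at t within {0..}) \<and>
      ((\<lambda>s. Bh s k) has_vector_derivative
          (- (\<i> *s kcross k (Eh t k)))) (at t within {0..}) \<and>
      \<i> * kdot k (Eh t k) = - complex_of_real (\<beta> / \<gamma>) * nh t k \<and>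
      kdot k (Bh t k) = 0)"

end

theory Submission
  imports Defs
begin

text \<open>
  The plain energy |n|^2 + |u|^2 + |E|^2 + |B|^2 of the transformed system is dissipated only
  through the viscous term mu |k|^2 |u|^2.  With a = 1/(1 + |k|^2) one adds the cross terms
  k1 a Re<ik n, u> + k2 |k|^2 a^2 Re<u, E> - k3 |k|^2 a^3 Re<E, ik x B>.  Their time derivatives
  produce damping of n (Gauss' law ik.E = -(beta/gamma) n turns the coupling beta E into
  (beta^2/gamma) |n|^2), of E with weight |k|^2 a^2, and of B with weight |k|^4 a^3 (since
  k.B = 0 gives |k x B| = |k| |B|).  For k3 small against k2 and k1, k2 small against mu, Young's
  inequality absorbs every remaining cross term into these damping terms and mu |k|^2 |u|^2,
  while the modified energy stays between half and twice |U|^2.  The decay form follows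
  because |k|^4 a^3 is dominated by each of the weights 1, |k|^2 and |k|^2 a^2.
\<close>

lemma abs_le_young:
  fixes X A B e :: real
  assumes "X\<^sup>2 \<le> A * B" "0 \<le> A" "0 \<le> B" "0 < e"
  shows "\<bar>X\<bar> \<le> e * A + B / (4 * e)"
proof -
  have "A * B \<le> (e * A + B / (4 * e))\<^sup>2"
    using assms(4) sum_power2_ge_zero[of "e * A - B / (4 * e)" 0]
    by (simp add: power2_eq_square field_simps)
  then have "\<bar>X\<bar>\<^sup>2 \<le> (e * A + B / (4 * e))\<^sup>2"
    using assms(1) by simp
  moreover have "0 \<le> e * A + B / (4 * e)"
    using assms by simp
  ultimately show ?thesis
    using power2_le_imp_le by blast
qed

lemma abs_le_half_sum:
  fixes X A B w :: real
  assumes "X\<^sup>2 \<le> w * (A * B)" "0 \<le> w" "w \<le> 1" "0 \<le> A" "0 \<le> B"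
  shows "\<bar>X\<bar> \<le> (A + B) / 2"
proof -
  have "X\<^sup>2 \<le> A * B"
    using assms mult_left_le_one_le[of "A * B" w] by simp
  from abs_le_young[OF this assms(4,5), of "1/2"] show ?thesis
    by simp
qed

lemma abs_mult_le_half:
  fixes k Z S :: real
  assumes "\<bar>k\<bar> \<le> 1/2" "\<bar>Z\<bar> \<le> S"
  shows "\<bar>k * Z\<bar> \<le> S / 2"
  using mult_mono[OF assms] by (simp add: abs_mult)

lemma reciprocal_one_plus_bounds:
  fixes K a :: real
  assumes "0 \<le> K" "a * (1 + K) = 1"
  shows "0 < a" "a \<le> 1" "K * a \<le> 1" "K * a\<^sup>2 \<le> 1"
proof -
  have a: "a = 1 / (1 + K)"
    using assms by (simp add: field_simps)
  show "0 < a" "a \<le> 1" "K * a \<le> 1"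
    unfolding a using assms(1) by (simp_all add: field_simps)
  then show "K * a\<^sup>2 \<le> 1"
    using assms(1) mult_le_one[of "K * a" a] by (simp add: power2_eq_square mult.assoc)
qed

lemma inner_power2_le: "(inner x y)\<^sup>2 \<le> (norm x)\<^sup>2 * (norm y)\<^sup>2"
  using power_mono[OF Cauchy_Schwarz_ineq2[of x y] abs_ge_zero, of 2]
  by (simp add: power_mult_distrib)

lemma has_real_derivative_inner:
  assumes "(f has_vector_derivative f') (at x within S)" "(g has_vector_derivative g') (at x within S)"
  shows "((\<lambda>s. inner (f s) (g s)) has_real_derivative inner f' (g x) + inner (f x) g') (at x within S)"
  using bounded_bilinear.has_vector_derivative[OF bounded_bilinear_inner assms]
  by (simp add: has_real_derivative_iff_has_vector_derivative add.commute)

lemma energy_equivalence: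
  fixes N U E B K a X1 X2 X3 k1 k2 k3 :: real
  assumes nonneg: "0 \<le> N" "0 \<le> U" "0 \<le> E" "0 \<le> B" "0 \<le> K" and a: "a * (1 + K) = 1"
    and X1: "X1\<^sup>2 \<le> K * N * U" and X2: "X2\<^sup>2 \<le> U * E" and X3: "X3\<^sup>2 \<le> K * E * B"
    and k: "\<bar>k1\<bar> \<le> 1/2" "\<bar>k2\<bar> \<le> 1/2" "\<bar>k3\<bar> \<le> 1/2"
  shows "1/2 * (N + U + E + B) \<le> N + U + E + B + k1 * a * X1 + k2 * K * a\<^sup>2 * X2 - k3 * K * a^3 * X3"
    and "N + U + E + B + k1 * a * X1 + k2 * K * a\<^sup>2 * X2 - k3 * K * a^3 * X3 \<le> 2 * (N + U + E + B)"
proof -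
  define w where "w = K * a\<^sup>2"
  have w: "0 \<le> w" "w \<le> 1"
    using reciprocal_one_plus_bounds[OF nonneg(5) a] nonneg(5) by (simp_all add: w_def)
  have "(a * X1)\<^sup>2 \<le> w * (N * U)"
    using mult_left_mono[OF X1, of "a\<^sup>2"] by (simp add: w_def algebra_simps)
  then have X1_bound: "\<bar>a * X1\<bar> \<le> (N + U) / 2"
    using abs_le_half_sum w nonneg by blast
  have "(K * a\<^sup>2 * X2)\<^sup>2 \<le> w\<^sup>2 * (U * E)"
    using mult_left_mono[OF X2, of "w\<^sup>2"] by (simp add: w_def power_mult_distrib)
  then have X2_bound: "\<bar>K * a\<^sup>2 * X2\<bar> \<le> (U + E) / 2"
    using abs_le_half_sum w nonneg by (simp add: power_le_one)
  have "(K * a^3 * X3)\<^sup>2 \<le> w^3 * (E * B)"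
    using mult_left_mono[OF X3, of "K\<^sup>2 * a^6"] zero_le_power2[of "K * a^3"]
    by (simp add: w_def eval_nat_numeral algebra_simps)
  then have X3_bound: "\<bar>K * a^3 * X3\<bar> \<le> (E + B) / 2"
    using abs_le_half_sum w nonneg by (simp add: power_le_one)
  from abs_mult_le_half[OF k(1) X1_bound] abs_mult_le_half[OF k(2) X2_bound]
    abs_mult_le_half[OF k(3) X3_bound]
  show "1/2 * (N + U + E + B) \<le> N + U + E + B + k1 * a * X1 + k2 * K * a\<^sup>2 * X2 - k3 * K * a^3 * X3"
    and "N + U + E + B + k1 * a * X1 + k2 * K * a\<^sup>2 * X2 - k3 * K * a^3 * X3 \<le> 2 * (N + U + E + B)"
    using nonneg by (auto simp: abs_le_iff mult.assoc)
qed

lemma decay_of_equivalent_energy: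
  fixes D c N U E B K a F :: real
  assumes "D + c * N + c * K * U + c * (K * a\<^sup>2) * E + c * (K\<^sup>2 * a^3) * B \<le> 0"
    and "0 \<le> c" "0 \<le> N" "0 \<le> U" "0 \<le> E" "0 \<le> B" "0 \<le> K" "a * (1 + K) = 1"
    and F: "F \<le> 2 * (N + U + E + B)"
  shows "D + c / 2 * (K\<^sup>2 * a^3) * F \<le> 0"
proof -
  note a = reciprocal_one_plus_bounds[OF assms(7,8)]
  have w: "0 \<le> K\<^sup>2 * a^3" "K\<^sup>2 * a^3 \<le> K * a\<^sup>2" "K * a\<^sup>2 \<le> K" "K * a\<^sup>2 \<le> 1"
    using a assms(7) mult_right_mono[of "K * a" 1 "K * a\<^sup>2"] mult_left_mono[of "a\<^sup>2" 1 K]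
    by (simp_all add: power2_eq_square power3_eq_cube mult_ac mult_le_one)
  have "c / 2 * (K\<^sup>2 * a^3) * F \<le> c / 2 * (K\<^sup>2 * a^3) * (2 * (N + U + E + B))"
    using assms(2) w(1) by (intro mult_left_mono[OF F]) simp
  also have "\<dots> = c * (K\<^sup>2 * a^3) * (N + U + E + B)"
    by simp
  also have "\<dots> \<le> c * N + c * K * U + c * (K * a\<^sup>2) * E + c * (K\<^sup>2 * a^3) * B"
  proof -
    have "K\<^sup>2 * a^3 * N \<le> 1 * N" "K\<^sup>2 * a^3 * U \<le> K * U" "K\<^sup>2 * a^3 * E \<le> K * a\<^sup>2 * E"
      using w assms(3-5) by (intro mult_right_mono; linarith)+
    then have "c * (K\<^sup>2 * a^3 * N) \<le> c * N" "c * (K\<^sup>2 * a^3 * U) \<le> c * (K * U)"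
      "c * (K\<^sup>2 * a^3 * E) \<le> c * (K * a\<^sup>2 * E)"
      using assms(2) by (simp_all add: mult_left_mono)
    then show ?thesis
      by (simp add: algebra_simps)
  qed
  finally show ?thesis
    using assms(1) by linarith
qed

definition grad_symbol :: "real^3 \<Rightarrow> complex \<Rightarrow> complex^3" where
  "grad_symbol k z = kscale k (\<i> * z)"

definition curl_symbol :: "real^3 \<Rightarrow> complex^3 \<Rightarrow> complex^3" where
  "curl_symbol k v = \<i> *s kcross k v"

lemmas symbol_component_simps =
  inner_vec_def sum_3 inner_complex_def kdot_def kcross_def kscale_def grad_symbol_def
  curl_symbol_def

lemma norm_kcross_kdot:
  "(norm (kcross k v))\<^sup>2 + (cmod (kdot k v))\<^sup>2 = (norm k)\<^sup>2 * (norm v)\<^sup>2"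
  unfolding power2_norm_eq_inner by (simp add: symbol_component_simps algebra_simps)

lemma kdot_power2_le: "(cmod (kdot k v))\<^sup>2 \<le> (norm k)\<^sup>2 * (norm v)\<^sup>2"
  using norm_kcross_kdot[of k v] zero_le_power2[of "norm (kcross k v)"] by linarith

lemma norm_kcross_power2_le: "(norm (kcross k v))\<^sup>2 \<le> (norm k)\<^sup>2 * (norm v)\<^sup>2"
  using norm_kcross_kdot[of k v] zero_le_power2[of "cmod (kdot k v)"] by linarith

lemma norm_curl_symbol: "norm (curl_symbol k v) = norm (kcross k v)"
  unfolding curl_symbol_def norm_eq_sqrt_inner by (simp add: symbol_component_simps algebra_simps)

lemma norm_grad_symbol: "(norm (grad_symbol k z))\<^sup>2 = (norm k)\<^sup>2 * (cmod z)\<^sup>2"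
  unfolding power2_norm_eq_inner by (simp add: symbol_component_simps algebra_simps)

lemma inner_grad_symbol_power2_le:
  "(inner (grad_symbol k z) v)\<^sup>2 \<le> (norm k)\<^sup>2 * (cmod z)\<^sup>2 * (norm v)\<^sup>2"
  using inner_power2_le[of "grad_symbol k z" v] by (simp add: norm_grad_symbol)

lemma inner_curl_symbol_power2_le:
  "(inner v (curl_symbol k w))\<^sup>2 \<le> (norm k)\<^sup>2 * (norm v)\<^sup>2 * (norm w)\<^sup>2"
proof -
  have "(inner v (curl_symbol k w))\<^sup>2 \<le> (norm v)\<^sup>2 * (norm (kcross k w))\<^sup>2"
    using inner_power2_le[of v "curl_symbol k w"] by (simp add: norm_curl_symbol)
  also have "\<dots> \<le> (norm v)\<^sup>2 * ((norm k)\<^sup>2 * (norm w)\<^sup>2)"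
    by (rule mult_left_mono[OF norm_kcross_power2_le]) simp
  finally show ?thesis
    by (simp add: mult_ac)
qed

lemma inner_grad_symbol_gauss:
  assumes "\<i> * kdot k E = - complex_of_real r * n"
  shows "inner (grad_symbol k n) E = r * (cmod n)\<^sup>2"
proof -
  have "inner (grad_symbol k n) E = Re (cnj n * (- (\<i> * kdot k E)))"
    by (simp add: symbol_component_simps algebra_simps)
  then show ?thesis
    unfolding assms cmod_power2 by (simp add: power2_eq_square algebra_simps)
qed

lemma bounded_linear_grad_symbol: "bounded_linear (grad_symbol k)"
proof -
  have "linear (grad_symbol k)"
    by (rule linearI; simp add: grad_symbol_def kscale_def vec_eq_iff;
        simp add: scaleR_conv_of_real algebra_simps)
  then show ?thesis
    using linear_conv_bounded_linear by blast
qed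

lemma bounded_linear_curl_symbol: "bounded_linear (curl_symbol k)"
proof -
  have "linear (curl_symbol k)"
    by (rule linearI; simp add: curl_symbol_def kcross_def vec_eq_iff forall_3;
        simp add: scaleR_conv_of_real algebra_simps)
  then show ?thesis
    using linear_conv_bounded_linear by blast
qed

section \<open>The transformed system and the modified energy\<close>

definition density_rate :: "real \<Rightarrow> real^3 \<Rightarrow> complex^3 \<Rightarrow> complex" where
  "density_rate \<gamma> k u = - \<i> * complex_of_real \<gamma> * kdot k u"

definition velocity_rate ::
  "real \<Rightarrow> real \<Rightarrow> real \<Rightarrow> real^3 \<Rightarrow> complex \<Rightarrow> complex^3 \<Rightarrow> complex^3 \<Rightarrow> complex^3" where
  "velocity_rate \<gamma> \<beta> \<mu> k n u E = - ((\<i> * complex_of_real \<gamma>) *s kscale k n) - complex_of_real \<beta> *s E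
     - complex_of_real (\<mu> * (norm k)\<^sup>2) *s u"

definition electric_rate :: "real \<Rightarrow> real^3 \<Rightarrow> complex^3 \<Rightarrow> complex^3 \<Rightarrow> complex^3" where
  "electric_rate \<beta> k u B = \<i> *s kcross k B + complex_of_real \<beta> *s u"

definition magnetic_rate :: "real^3 \<Rightarrow> complex^3 \<Rightarrow> complex^3" where
  "magnetic_rate k E = - (\<i> *s kcross k E)"

lemma fourier_system_rates:
  assumes "fourier_system \<gamma> \<beta> \<mu> nh uh Eh Bh" "0 \<le> t"
  shows "((\<lambda>s. nh s k) has_vector_derivative density_rate \<gamma> k (uh t k)) (at t within {0..})"
    and "((\<lambda>s. uh s k) has_vector_derivative velocity_rate \<gamma> \<beta> \<mu> k (nh t k) (uh t k) (Eh t k))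
      (at t within {0..})"
    and "((\<lambda>s. Eh s k) has_vector_derivative electric_rate \<beta> k (uh t k) (Bh t k)) (at t within {0..})"
    and "((\<lambda>s. Bh s k) has_vector_derivative magnetic_rate k (Eh t k)) (at t within {0..})"
    and "\<i> * kdot k (Eh t k) = - complex_of_real (\<beta> / \<gamma>) * nh t k"
    and "kdot k (Bh t k) = 0"
  using assms unfolding fourier_system_def density_rate_def velocity_rate_def electric_rate_def
    magnetic_rate_def by blast+

lemma basic_energy_rate:
  "inner n (density_rate \<gamma> k u) + inner u (velocity_rate \<gamma> \<beta> \<mu> k n u E)
     + inner E (electric_rate \<beta> k u B) + inner B (magnetic_rate k E) = - \<mu> * (norm k)\<^sup>2 * (norm u)\<^sup>2"
  unfolding density_rate_def velocity_rate_def electric_rate_def magnetic_rate_def power2_norm_eq_inner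
  by (simp add: symbol_component_simps algebra_simps)

lemma density_velocity_rate:
  "inner (grad_symbol k (density_rate \<gamma> k u)) u + inner (grad_symbol k n) (velocity_rate \<gamma> \<beta> \<mu> k n u E)
   = \<gamma> * (cmod (kdot k u))\<^sup>2 - \<gamma> * (norm k)\<^sup>2 * (cmod n)\<^sup>2 - \<mu> * (norm k)\<^sup>2 * inner (grad_symbol k n) u
     - \<beta> * inner (grad_symbol k n) E"
  unfolding density_rate_def velocity_rate_def power2_norm_eq_inner
  by (simp add: symbol_component_simps algebra_simps)

lemma velocity_electric_rate:
  "inner (velocity_rate \<gamma> \<beta> \<mu> k n u E) E + inner u (electric_rate \<beta> k u B)
   = \<beta> * (norm u)\<^sup>2 - \<beta> * (norm E)\<^sup>2 - \<gamma> * inner (grad_symbol k n) E - \<mu> * (norm k)\<^sup>2 * inner u E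
     + inner u (curl_symbol k B)"
  unfolding velocity_rate_def electric_rate_def power2_norm_eq_inner
  by (simp add: symbol_component_simps algebra_simps)

lemma electric_curl_rate:
  "inner (electric_rate \<beta> k u B) (curl_symbol k B) + inner E (curl_symbol k (magnetic_rate k E))
   = (norm (kcross k B))\<^sup>2 + \<beta> * inner u (curl_symbol k B) + (cmod (kdot k E))\<^sup>2 - (norm k)\<^sup>2 * (norm E)\<^sup>2"
  unfolding electric_rate_def magnetic_rate_def power2_norm_eq_inner
  by (simp add: symbol_component_simps algebra_simps)

lemma energy_rate_formula:
  assumes "\<gamma> \<noteq> 0" and gauss: "\<i> * kdot k E = - complex_of_real (\<beta> / \<gamma>) * n"
    and solenoidal: "kdot k B = 0"
  defines "K \<equiv> (norm k)\<^sup>2"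
  shows "2 * (inner n (density_rate \<gamma> k u) + inner u (velocity_rate \<gamma> \<beta> \<mu> k n u E)
        + inner E (electric_rate \<beta> k u B) + inner B (magnetic_rate k E))
      + k1 * a * (inner (grad_symbol k (density_rate \<gamma> k u)) u
        + inner (grad_symbol k n) (velocity_rate \<gamma> \<beta> \<mu> k n u E))
      + k2 * K * a\<^sup>2 * (inner (velocity_rate \<gamma> \<beta> \<mu> k n u E) E + inner u (electric_rate \<beta> k u B))
      - k3 * K * a^3 * (inner (electric_rate \<beta> k u B) (curl_symbol k B)
        + inner E (curl_symbol k (magnetic_rate k E)))
    = - 2 * \<mu> * K * (norm u)\<^sup>2
      + k1 * a * (\<gamma> * (cmod (kdot k u))\<^sup>2 - (\<gamma> * K + \<beta>\<^sup>2 / \<gamma>) * (cmod n)\<^sup>2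
        - \<mu> * K * inner (grad_symbol k n) u)
      + k2 * K * a\<^sup>2 * (\<beta> * (norm u)\<^sup>2 - \<beta> * (norm E)\<^sup>2 - \<beta> * (cmod n)\<^sup>2 - \<mu> * K * inner u E
        + inner u (curl_symbol k B))
      - k3 * K * a^3 * (K * (norm B)\<^sup>2 + \<beta> * inner u (curl_symbol k B) + (cmod (kdot k E))\<^sup>2
        - K * (norm E)\<^sup>2)"
proof -
  have "(norm (kcross k B))\<^sup>2 = K * (norm B)\<^sup>2"
    using norm_kcross_kdot[of k B] solenoidal by (simp add: K_def)
  then show ?thesis
    unfolding basic_energy_rate density_velocity_rate velocity_electric_rate electric_curl_rate
      inner_grad_symbol_gauss[OF gauss] K_def[symmetric]
    using assms(1) by (simp add: algebra_simps power2_eq_square)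
qed

definition frequency_weight :: "real^3 \<Rightarrow> real" where
  "frequency_weight k = 1 / (1 + (norm k)\<^sup>2)"

lemma frequency_weight_mult: "frequency_weight k * (1 + (norm k)\<^sup>2) = 1"
proof -
  have "0 < 1 + (norm k)\<^sup>2"
    by (simp add: add_pos_nonneg)
  then show ?thesis
    by (simp add: frequency_weight_def)
qed

definition energy ::
  "real \<Rightarrow> real \<Rightarrow> real \<Rightarrow> real^3 \<Rightarrow> complex \<Rightarrow> complex^3 \<Rightarrow> complex^3 \<Rightarrow> complex^3 \<Rightarrow> real" where
  "energy k1 k2 k3 k n u E B =
     (cmod n)\<^sup>2 + (norm u)\<^sup>2 + (norm E)\<^sup>2 + (norm B)\<^sup>2
     + k1 * frequency_weight k * inner (grad_symbol k n) u
     + k2 * (norm k)\<^sup>2 * (frequency_weight k)\<^sup>2 * inner u E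
     - k3 * (norm k)\<^sup>2 * (frequency_weight k)^3 * inner E (curl_symbol k B)"

lemma has_real_derivative_energy:
  assumes "(n has_vector_derivative n') (at t within S)" "(u has_vector_derivative u') (at t within S)"
    "(E has_vector_derivative E') (at t within S)" "(B has_vector_derivative B') (at t within S)"
  shows "((\<lambda>s. energy k1 k2 k3 k (n s) (u s) (E s) (B s)) has_real_derivative
      2 * (inner (n t) n' + inner (u t) u' + inner (E t) E' + inner (B t) B')
      + k1 * frequency_weight k * (inner (grad_symbol k n') (u t) + inner (grad_symbol k (n t)) u')
      + k2 * (norm k)\<^sup>2 * (frequency_weight k)\<^sup>2 * (inner u' (E t) + inner (u t) E')
      - k3 * (norm k)\<^sup>2 * (frequency_weight k)^3
        * (inner E' (curl_symbol k (B t)) + inner (E t) (curl_symbol k B'))) (at t within S)"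
  unfolding energy_def power2_norm_eq_inner
  by (rule DERIV_cong, (rule DERIV_add DERIV_diff DERIV_cmult has_real_derivative_inner assms
      bounded_linear.has_vector_derivative[OF bounded_linear_grad_symbol]
      bounded_linear.has_vector_derivative[OF bounded_linear_curl_symbol])+)
    (simp add: inner_commute algebra_simps)

section \<open>Absorbing the cross terms\<close>

text \<open>Each of the five cross terms that involve the velocity uses up at most a fifth of the
  viscous dissipation mu |k|^2 |u|^2; this is where the factors 5 come from.\<close>

locale energy_weights =
  fixes \<gamma> \<beta> \<mu> m k1 k2 k3 :: real
  assumes pos: "0 < \<gamma>" "0 < \<beta>" "0 < \<mu>" "0 < m"
    and m_le: "m \<le> \<gamma>" "m \<le> \<beta>\<^sup>2 / \<gamma>"
    and k_pos: "0 < k1" "0 < k2" "0 < k3"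
    and k_le_half: "k1 \<le> 1/2" "k2 \<le> 1/2" "k3 \<le> 1/2"
    and k1_small: "k1 * \<gamma> \<le> \<mu> / 5" "k1 * \<mu> \<le> m / 5"
    and k2_small: "k2 * \<beta> \<le> \<mu> / 5" "k2 * \<mu> \<le> \<beta> / 5"
    and k3_small: "k3 \<le> k2 * \<beta> / 4" "(k2 + k3 * \<beta>)\<^sup>2 \<le> k3 * \<mu> / 5"
begin

lemma compression_term_bound:
  assumes "0 \<le> K" "a * (1 + K) = 1" "0 \<le> P" "P \<le> K * U"
  shows "k1 * a * \<gamma> * P \<le> \<mu> * K * U / 5"
proof -
  have "a * P \<le> P"
    using assms(3) reciprocal_one_plus_bounds[OF assms(1,2)] by (simp add: mult_left_le_one_le)
  then have "a * P \<le> K * U"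
    using assms(4) by linarith
  then have "k1 * \<gamma> * (a * P) \<le> k1 * \<gamma> * (K * U)"
    using k_pos pos by (simp add: mult_left_mono)
  also have "\<dots> \<le> \<mu> / 5 * (K * U)"
    using mult_right_mono[OF k1_small(1)] assms(3,4) by simp
  finally show ?thesis
    by (simp add: mult_ac)
qed

lemma density_damping:
  assumes "0 \<le> N" "0 \<le> K" "a * (1 + K) = 1"
  shows "k1 * m * N \<le> k1 * a * (\<gamma> * K + \<beta>\<^sup>2 / \<gamma>) * N"
proof -
  have "m = m * (a * (1 + K))"
    using assms(3) by simp
  also have "\<dots> = a * (m * K + m)"
    by (simp add: algebra_simps)
  also have "\<dots> \<le> a * (\<gamma> * K + \<beta>\<^sup>2 / \<gamma>)"
    using m_le assms reciprocal_one_plus_bounds(1)[OF assms(2,3)]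
    by (intro mult_left_mono add_mono mult_right_mono) (auto simp: mult.commute)
  finally have "m * N \<le> a * (\<gamma> * K + \<beta>\<^sup>2 / \<gamma>) * N"
    using assms(1) by (rule mult_right_mono)
  then show ?thesis
    using k_pos mult_left_mono by (fastforce simp: mult.assoc)
qed

lemma density_velocity_coupling_bound:
  assumes "0 \<le> N" "0 \<le> U" "0 \<le> K" "a * (1 + K) = 1" and X1: "X1\<^sup>2 \<le> K * N * U"
  shows "k1 * a * \<mu> * K * \<bar>X1\<bar> \<le> k1 * m * N / 4 + \<mu> * K * U / 5"
proof -
  have "(a * \<mu> * K * X1)\<^sup>2 = (K * a)\<^sup>2 * \<mu>\<^sup>2 * X1\<^sup>2"
    by (simp add: power_mult_distrib)
  also have "\<dots> \<le> 1 * \<mu>\<^sup>2 * (K * N * U)"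
    using reciprocal_one_plus_bounds[OF assms(3,4)] assms X1
    by (intro mult_mono) (auto simp: power_le_one)
  finally have "(a * \<mu> * K * X1)\<^sup>2 \<le> N * (\<mu>\<^sup>2 * K * U)"
    by (simp add: mult_ac)
  from abs_le_young[OF this, of "m / 4"]
  have "\<bar>a * \<mu> * K * X1\<bar> \<le> m / 4 * N + \<mu>\<^sup>2 * K * U / m"
    using assms pos by simp
  then have "k1 * \<bar>a * \<mu> * K * X1\<bar> \<le> k1 * (m / 4 * N + \<mu>\<^sup>2 * K * U / m)"
    using k_pos by (simp add: mult_left_mono)
  also have "\<dots> = k1 * m * N / 4 + k1 * \<mu> / m * (\<mu> * K * U)"
    using pos by (simp add: field_simps power2_eq_square)
  also have "k1 * \<mu> / m * (\<mu> * K * U) \<le> 1 / 5 * (\<mu> * K * U)"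
    using k1_small(2) pos assms by (intro mult_right_mono) (auto simp: field_simps)
  finally show ?thesis
    using k_pos pos reciprocal_one_plus_bounds(1)[OF assms(3,4)] assms(3) by (simp add: abs_mult)
qed

lemma velocity_forcing_bound:
  assumes "0 \<le> U" "0 \<le> K" "a * (1 + K) = 1"
  shows "k2 * K * a\<^sup>2 * \<beta> * U \<le> \<mu> * K * U / 5"
proof -
  have "a\<^sup>2 * (K * U) \<le> 1 * (K * U)"
    using reciprocal_one_plus_bounds[OF assms(2,3)] assms(1,2)
    by (intro mult_right_mono) (auto simp: power_le_one)
  then have "k2 * \<beta> * (a\<^sup>2 * (K * U)) \<le> k2 * \<beta> * (K * U)"
    using k_pos pos by (simp add: mult_left_mono)
  also have "\<dots> \<le> \<mu> / 5 * (K * U)"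
    using mult_right_mono[OF k2_small(1), of "K * U"] assms(1,2) by simp
  finally show ?thesis
    by (simp add: mult_ac)
qed

lemma velocity_electric_coupling_bound:
  assumes "0 \<le> U" "0 \<le> E" "0 \<le> K" "a * (1 + K) = 1" and X2: "X2\<^sup>2 \<le> U * E"
  shows "k2 * K * a\<^sup>2 * \<mu> * K * \<bar>X2\<bar> \<le> k2 * \<beta> * (K * a\<^sup>2 * E) / 4 + \<mu> * K * U / 5"
proof -
  have a: "0 < a" "K * a \<le> 1"
    using reciprocal_one_plus_bounds[OF assms(3,4)] by auto
  have "(\<mu> * K\<^sup>2 * a\<^sup>2 * X2)\<^sup>2 = (K * a)\<^sup>2 * (\<mu>\<^sup>2 * K\<^sup>2 * a\<^sup>2) * X2\<^sup>2"
    by (simp add: power_mult_distrib power2_eq_square)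
  also have "\<dots> \<le> 1 * (\<mu>\<^sup>2 * K\<^sup>2 * a\<^sup>2) * (U * E)"
    using a assms X2 by (intro mult_mono) (auto simp: power_le_one)
  finally have "(\<mu> * K\<^sup>2 * a\<^sup>2 * X2)\<^sup>2 \<le> (K * a\<^sup>2 * E) * (\<mu>\<^sup>2 * K * U)"
    by (simp add: power2_eq_square mult_ac)
  from abs_le_young[OF this _ _, of "\<beta> / 4"]
  have "\<bar>\<mu> * K\<^sup>2 * a\<^sup>2 * X2\<bar> \<le> \<beta> / 4 * (K * a\<^sup>2 * E) + \<mu>\<^sup>2 * K * U / \<beta>"
    using assms pos by simp
  then have "k2 * \<bar>\<mu> * K\<^sup>2 * a\<^sup>2 * X2\<bar> \<le> k2 * (\<beta> / 4 * (K * a\<^sup>2 * E) + \<mu>\<^sup>2 * K * U / \<beta>)"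
    using k_pos by (simp add: mult_left_mono)
  also have "\<dots> = k2 * \<beta> * (K * a\<^sup>2 * E) / 4 + k2 * \<mu> / \<beta> * (\<mu> * K * U)"
    using pos by (simp add: field_simps power2_eq_square)
  also have "k2 * \<mu> / \<beta> * (\<mu> * K * U) \<le> 1 / 5 * (\<mu> * K * U)"
    using k2_small(2) pos assms by (intro mult_right_mono) (auto simp: field_simps)
  finally show ?thesis
    using k_pos pos a assms(3) by (simp add: abs_mult power2_eq_square mult_ac)
qed

lemma curl_coupling_bound:
  assumes "0 \<le> U" "0 \<le> B" "0 \<le> K" "a * (1 + K) = 1" and Y: "Y\<^sup>2 \<le> K * U * B"
  shows "(k2 * K * a\<^sup>2 + k3 * \<beta> * K * a^3) * \<bar>Y\<bar> \<le> k3 * (K\<^sup>2 * a^3 * B) / 4 + \<mu> * K * U / 5"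
proof -
  define q where "q = k2 + k3 * \<beta>"
  have q: "0 < q"
    using k_pos pos by (simp add: q_def add_pos_pos)
  have a: "0 < a" "a \<le> 1"
    using reciprocal_one_plus_bounds[OF assms(3,4)] by auto
  have "k2 * K * a\<^sup>2 + k3 * \<beta> * K * a^3 = (k2 + k3 * \<beta> * a) * (K * a\<^sup>2)"
    by (simp add: power2_eq_square power3_eq_cube algebra_simps)
  also have "\<dots> \<le> q * (K * a\<^sup>2)"
  proof (rule mult_right_mono)
    show "k2 + k3 * \<beta> * a \<le> q"
      using a k_pos pos mult_left_le[of a "k3 * \<beta>"] by (simp add: q_def)
  qed (use assms(3) in simp)
  finally have "k2 * K * a\<^sup>2 + k3 * \<beta> * K * a^3 \<le> q * (K * a\<^sup>2)" .
  from mult_right_mono[OF this abs_ge_zero]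
  have coefficient: "(k2 * K * a\<^sup>2 + k3 * \<beta> * K * a^3) * \<bar>Y\<bar> \<le> q * \<bar>K * a\<^sup>2 * Y\<bar>"
    using assms(3) by (simp add: abs_mult mult.assoc)
  have "(K * a\<^sup>2 * Y)\<^sup>2 = (K\<^sup>2 * a^3) * a * Y\<^sup>2"
    by (simp add: power_mult_distrib power2_eq_square power3_eq_cube mult_ac)
  also have "\<dots> \<le> (K\<^sup>2 * a^3) * (K * U * B)"
  proof -
    have "a * Y\<^sup>2 \<le> K * U * B"
      using a Y mult_left_le_one_le[of "Y\<^sup>2" a] by simp
    then show ?thesis
      using a mult_left_mono[of "a * Y\<^sup>2" "K * U * B" "K\<^sup>2 * a^3"] by (simp add: mult.assoc)
  qed
  finally have "(K * a\<^sup>2 * Y)\<^sup>2 \<le> (K\<^sup>2 * a^3 * B) * (K * U)"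
    by (simp add: mult_ac)
  from abs_le_young[OF this _ _, of "k3 / (4 * q)"]
  have "\<bar>K * a\<^sup>2 * Y\<bar> \<le> k3 / (4 * q) * (K\<^sup>2 * a^3 * B) + q / k3 * (K * U)"
    using assms a k_pos q by (simp add: mult_ac)
  then have "q * \<bar>K * a\<^sup>2 * Y\<bar> \<le> q * (k3 / (4 * q) * (K\<^sup>2 * a^3 * B) + q / k3 * (K * U))"
    using q by (simp add: mult_left_mono)
  also have "\<dots> = k3 * (K\<^sup>2 * a^3 * B) / 4 + q\<^sup>2 / k3 * (K * U)"
    using q by (simp add: field_simps power2_eq_square)
  also have "q\<^sup>2 / k3 * (K * U) \<le> \<mu> / 5 * (K * U)"
  proof (rule mult_right_mono)
    show "q\<^sup>2 / k3 \<le> \<mu> / 5"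
      using k3_small(2) k_pos by (simp add: q_def pos_divide_le_eq mult.commute)
  qed (use assms in simp)
  finally show ?thesis
    using coefficient by (simp add: mult_ac)
qed

lemma electric_damping_bound:
  assumes "0 \<le> E" "0 \<le> K" "a * (1 + K) = 1"
  shows "k3 * K\<^sup>2 * a^3 * E \<le> k2 * \<beta> * (K * a\<^sup>2 * E) / 4"
proof -
  have "k3 * K\<^sup>2 * a^3 * E = k3 * (K * a) * (K * a\<^sup>2 * E)"
    by (simp add: power2_eq_square power3_eq_cube mult_ac)
  also have "\<dots> \<le> k2 * \<beta> / 4 * 1 * (K * a\<^sup>2 * E)"
    using reciprocal_one_plus_bounds[OF assms(2,3)] k3_small(1) k_pos assms
    by (intro mult_right_mono mult_mono) auto
  finally show ?thesis
    by simp
qed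

lemma dissipation_bound:
  assumes nonneg: "0 \<le> N" "0 \<le> U" "0 \<le> E" "0 \<le> B" "0 \<le> K" and a: "a * (1 + K) = 1"
    and P: "0 \<le> P" "P \<le> K * U" and R: "0 \<le> R"
    and X1: "X1\<^sup>2 \<le> K * N * U" and X2: "X2\<^sup>2 \<le> U * E" and Y: "Y\<^sup>2 \<le> K * U * B"
  shows "- 2 * \<mu> * K * U + k1 * a * (\<gamma> * P - (\<gamma> * K + \<beta>\<^sup>2 / \<gamma>) * N - \<mu> * K * X1)
      + k2 * K * a\<^sup>2 * (\<beta> * U - \<beta> * E - \<beta> * N - \<mu> * K * X2 + Y)
      - k3 * K * a^3 * (K * B + \<beta> * Y + R - K * E)
    \<le> - 3/4 * (k1 * m * N) - \<mu> * K * U - k2 * \<beta> * (K * a\<^sup>2 * E) / 2 - 3/4 * (k3 * (K\<^sup>2 * a^3 * B))"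
proof -
  have a_pos: "0 < a"
    using reciprocal_one_plus_bounds(1)[OF nonneg(5) a] .
  have le_abs: "c * x \<le> c * \<bar>x\<bar>" "- (c * x) \<le> c * \<bar>x\<bar>" if "0 \<le> c" for c x :: real
    using mult_left_mono[OF abs_ge_self that, of x] mult_left_mono[OF abs_ge_minus_self that, of x]
    by simp_all
  have "- (k1 * a * \<mu> * K * X1) \<le> k1 * a * \<mu> * K * \<bar>X1\<bar>"
    using le_abs(2) k_pos pos a_pos nonneg by simp
  moreover have "- (k2 * K * a\<^sup>2 * \<mu> * K * X2) \<le> k2 * K * a\<^sup>2 * \<mu> * K * \<bar>X2\<bar>"
    using le_abs(2) k_pos pos a_pos nonneg by simp
  moreover have "k2 * K * a\<^sup>2 * Y - k3 * \<beta> * K * a^3 * Y \<le> (k2 * K * a\<^sup>2 + k3 * \<beta> * K * a^3) * \<bar>Y\<bar>"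
  proof -
    have "k2 * K * a\<^sup>2 * Y \<le> k2 * K * a\<^sup>2 * \<bar>Y\<bar>" "- (k3 * \<beta> * K * a^3 * Y) \<le> k3 * \<beta> * K * a^3 * \<bar>Y\<bar>"
      using k_pos pos a_pos nonneg by (intro le_abs; simp)+
    then show ?thesis
      unfolding distrib_right by linarith
  qed
  moreover have "0 \<le> k2 * K * a\<^sup>2 * \<beta> * N" "0 \<le> k3 * K * a^3 * R"
    using k_pos pos a_pos nonneg R by simp_all
  moreover have "- 2 * \<mu> * K * U + k1 * a * (\<gamma> * P - (\<gamma> * K + \<beta>\<^sup>2 / \<gamma>) * N - \<mu> * K * X1)
      + k2 * K * a\<^sup>2 * (\<beta> * U - \<beta> * E - \<beta> * N - \<mu> * K * X2 + Y)
      - k3 * K * a^3 * (K * B + \<beta> * Y + R - K * E)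
    = - 2 * \<mu> * K * U + k1 * a * \<gamma> * P - k1 * a * (\<gamma> * K + \<beta>\<^sup>2 / \<gamma>) * N - k1 * a * \<mu> * K * X1
      + k2 * K * a\<^sup>2 * \<beta> * U - k2 * \<beta> * (K * a\<^sup>2 * E) - k2 * K * a\<^sup>2 * \<beta> * N
      - k2 * K * a\<^sup>2 * \<mu> * K * X2 + (k2 * K * a\<^sup>2 * Y - k3 * \<beta> * K * a^3 * Y)
      - k3 * (K\<^sup>2 * a^3 * B) - k3 * K * a^3 * R + k3 * K\<^sup>2 * a^3 * E"
    by (simp add: algebra_simps power2_eq_square)
  ultimately show ?thesis
    using compression_term_bound[OF nonneg(5) a P]
      density_damping[OF nonneg(1,5) a]
      density_velocity_coupling_bound[OF nonneg(1,2,5) a X1]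
      velocity_forcing_bound[OF nonneg(2,5) a]
      velocity_electric_coupling_bound[OF nonneg(2,3,5) a X2]
      curl_coupling_bound[OF nonneg(2,4,5) a Y]
      electric_damping_bound[OF nonneg(3,5) a]
    by linarith
qed

definition decay_rate :: real where
  "decay_rate = min (min \<mu> (3/4 * (k1 * m))) (min (k2 * \<beta> / 2) (3/4 * k3))"

lemma decay_rate_pos: "0 < decay_rate"
  using pos k_pos by (simp add: decay_rate_def)

lemma dissipation_dominates_decay:
  assumes "0 \<le> N" "0 \<le> U" "0 \<le> E" "0 \<le> B" "0 \<le> K" "a * (1 + K) = 1"
    and D: "D \<le> - 3/4 * (k1 * m * N) - \<mu> * K * U - k2 * \<beta> * (K * a\<^sup>2 * E) / 2
      - 3/4 * (k3 * (K\<^sup>2 * a^3 * B))"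
  shows "D + decay_rate * N + decay_rate * K * U + decay_rate * (K * a\<^sup>2) * E
      + decay_rate * (K\<^sup>2 * a^3) * B \<le> 0"
proof -
  have a: "0 < a"
    using reciprocal_one_plus_bounds(1)[OF assms(5,6)] .
  have "decay_rate * N \<le> 3/4 * (k1 * m) * N"
    "decay_rate * (K * U) \<le> \<mu> * (K * U)"
    "decay_rate * (K * a\<^sup>2 * E) \<le> k2 * \<beta> / 2 * (K * a\<^sup>2 * E)"
    "decay_rate * (K\<^sup>2 * a^3 * B) \<le> 3/4 * k3 * (K\<^sup>2 * a^3 * B)"
    using assms a by (intro mult_right_mono; simp add: decay_rate_def)+
  then show ?thesis
    using D by (simp add: mult_ac)
qed

lemma energy_dissipation:
  fixes k :: "real^3"
  assumes "fourier_system \<gamma> \<beta> \<mu> nh uh Eh Bh" "0 \<le> t"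
  defines "K \<equiv> (norm k)\<^sup>2" and "a \<equiv> frequency_weight k"
  shows "\<exists>D. ((\<lambda>s. energy k1 k2 k3 k (nh s k) (uh s k) (Eh s k) (Bh s k)) has_real_derivative D)
      (at t within {0..}) \<and>
    D + decay_rate * (cmod (nh t k))\<^sup>2 + decay_rate * K * (norm (uh t k))\<^sup>2
      + decay_rate * (K * a\<^sup>2) * (norm (Eh t k))\<^sup>2 + decay_rate * (K\<^sup>2 * a^3) * (norm (Bh t k))\<^sup>2 \<le> 0"
proof -
  note rates = fourier_system_rates[OF assms(1,2), of k]
  have a: "a * (1 + K) = 1"
    unfolding a_def K_def by (rule frequency_weight_mult)
  have K: "0 \<le> K"
    by (simp add: K_def)
  have "\<gamma> \<noteq> 0"
    using pos by simp
  note formula = energy_rate_formula[OF this rates(5,6), folded K_def]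
  note derivative = has_real_derivative_energy[OF rates(1-4), of k1 k2 k3 k, folded a_def K_def]
  note dissipation = dissipation_bound[OF zero_le_power2 zero_le_power2 zero_le_power2 zero_le_power2
      K a zero_le_power2 kdot_power2_le[of k "uh t k", folded K_def] zero_le_power2
      inner_grad_symbol_power2_le[of k "nh t k" "uh t k", folded K_def]
      inner_power2_le[of "uh t k" "Eh t k"]
      inner_curl_symbol_power2_le[of "uh t k" k "Bh t k", folded K_def]]
  show ?thesis
    using derivative dissipation_dominates_decay[OF zero_le_power2 zero_le_power2 zero_le_power2
        zero_le_power2 K a dissipation]
    unfolding formula by blast
qed

lemma energy_estimates:
  assumes "fourier_system \<gamma> \<beta> \<mu> nh uh Eh Bh" "0 \<le> t"
  shows "1/2 * ((cmod (nh t k))\<^sup>2 + (norm (uh t k))\<^sup>2 + (norm (Eh t k))\<^sup>2 + (norm (Bh t k))\<^sup>2)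
      \<le> energy k1 k2 k3 k (nh t k) (uh t k) (Eh t k) (Bh t k) \<and>
    energy k1 k2 k3 k (nh t k) (uh t k) (Eh t k) (Bh t k)
      \<le> 2 * ((cmod (nh t k))\<^sup>2 + (norm (uh t k))\<^sup>2 + (norm (Eh t k))\<^sup>2 + (norm (Bh t k))\<^sup>2) \<and>
    (\<exists>D. ((\<lambda>s. energy k1 k2 k3 k (nh s k) (uh s k) (Eh s k) (Bh s k)) has_real_derivative D)
        (at t within {0..}) \<and>
      D + decay_rate * (cmod (nh t k))\<^sup>2 + decay_rate * (norm k)\<^sup>2 * (norm (uh t k))\<^sup>2
        + decay_rate * ((norm k)\<^sup>2 / (1 + (norm k)\<^sup>2)\<^sup>2) * (norm (Eh t k))\<^sup>2
        + decay_rate * ((norm k)^4 / (1 + (norm k)\<^sup>2)^3) * (norm (Bh t k))\<^sup>2 \<le> 0 \<and>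
      D + decay_rate / 2 * ((norm k)^4 / (1 + (norm k)\<^sup>2)^3)
        * energy k1 k2 k3 k (nh t k) (uh t k) (Eh t k) (Bh t k) \<le> 0)"
proof -
  define K a where "K = (norm k)\<^sup>2" and "a = frequency_weight k"
  have K: "0 \<le> K" and a: "a * (1 + K) = 1"
    unfolding K_def a_def by (simp_all add: frequency_weight_mult)
  have weights: "(norm k)\<^sup>2 / (1 + (norm k)\<^sup>2)\<^sup>2 = K * a\<^sup>2" "(norm k)^4 / (1 + (norm k)\<^sup>2)^3 = K\<^sup>2 * a^3"
    by (simp_all add: K_def a_def frequency_weight_def power_divide flip: power_mult)
  have energy: "energy k1 k2 k3 k (nh t k) (uh t k) (Eh t k) (Bh t k)
    = (cmod (nh t k))\<^sup>2 + (norm (uh t k))\<^sup>2 + (norm (Eh t k))\<^sup>2 + (norm (Bh t k))\<^sup>2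
      + k1 * a * inner (grad_symbol k (nh t k)) (uh t k) + k2 * K * a\<^sup>2 * inner (uh t k) (Eh t k)
      - k3 * K * a^3 * inner (Eh t k) (curl_symbol k (Bh t k))"
    by (simp add: energy_def K_def a_def)
  have k: "\<bar>k1\<bar> \<le> 1/2" "\<bar>k2\<bar> \<le> 1/2" "\<bar>k3\<bar> \<le> 1/2"
    using k_pos k_le_half by simp_all
  note equivalence = energy_equivalence[OF zero_le_power2 zero_le_power2 zero_le_power2
      zero_le_power2 K a inner_grad_symbol_power2_le[of k "nh t k" "uh t k", folded K_def]
      inner_power2_le[of "uh t k" "Eh t k"]
      inner_curl_symbol_power2_le[of "Eh t k" k "Bh t k", folded K_def] k, folded energy]
  show ?thesis
    unfolding weights unfolding K_def[symmetric]
    using equivalence energy_dissipation[OF assms, of k, folded K_def a_def]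
      decay_of_equivalent_energy[OF _ less_imp_le[OF decay_rate_pos] zero_le_power2 zero_le_power2
        zero_le_power2 zero_le_power2 K a equivalence(2)]
    by blast
qed

end

lemma energy_weights_exist:
  assumes "0 < \<gamma>" "0 < \<beta>" "0 < \<mu>"
  obtains m k1 k2 k3 where "energy_weights \<gamma> \<beta> \<mu> m k1 k2 k3"
proof -
  define m \<theta> where "m = min \<gamma> (\<beta>\<^sup>2 / \<gamma>)" and "\<theta> = min (\<beta> / 4) 1"
  define k1 where "k1 = min (1/2) (min (\<mu> / (5 * \<gamma>)) (m / (5 * \<mu>)))"
  define k2 where "k2 = min (1/2) (min (\<mu> / (5 * \<beta>)) (min (\<beta> / (5 * \<mu>)) (\<mu> * \<theta> / (5 * (1 + \<theta> * \<beta>)\<^sup>2))))"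
  have m: "0 < m" "m \<le> \<gamma>" "m \<le> \<beta>\<^sup>2 / \<gamma>"
    using assms by (auto simp: m_def)
  have \<theta>: "0 < \<theta>" "\<theta> \<le> \<beta> / 4" "\<theta> \<le> 1" "0 < 1 + \<theta> * \<beta>"
    using assms by (auto simp: \<theta>_def add_pos_pos)
  have "0 < k1" "k1 \<le> 1/2" "k1 \<le> \<mu> / (5 * \<gamma>)" "k1 \<le> m / (5 * \<mu>)"
    using assms m by (simp_all add: k1_def)
  then have k1: "0 < k1" "k1 \<le> 1/2" "k1 * \<gamma> \<le> \<mu> / 5" "k1 * \<mu> \<le> m / 5"
    using assms by (simp_all add: field_simps)
  have "0 < k2" "k2 \<le> 1/2" "k2 \<le> \<mu> / (5 * \<beta>)" "k2 \<le> \<beta> / (5 * \<mu>)"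
    "k2 \<le> \<mu> * \<theta> / (5 * (1 + \<theta> * \<beta>)\<^sup>2)"
    using assms \<theta> by (simp_all add: k2_def)
  then have k2: "0 < k2" "k2 \<le> 1/2" "k2 * \<beta> \<le> \<mu> / 5" "k2 * \<mu> \<le> \<beta> / 5"
    "k2 * (1 + \<theta> * \<beta>)\<^sup>2 \<le> \<mu> * \<theta> / 5"
    using assms \<theta> by (simp_all add: field_simps)
  \<comment> \<open>With k3 = theta k2 the condition on (k2 + k3 beta)^2 becomes linear in k2.\<close>
  have "(k2 + \<theta> * k2 * \<beta>)\<^sup>2 = k2 * (k2 * (1 + \<theta> * \<beta>)\<^sup>2)"
    by (simp add: power2_eq_square algebra_simps)
  also have "\<dots> \<le> k2 * (\<mu> * \<theta> / 5)"
    using k2 by (simp add: mult_left_mono)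
  finally have "(k2 + \<theta> * k2 * \<beta>)\<^sup>2 \<le> \<theta> * k2 * \<mu> / 5"
    by (simp add: mult_ac)
  moreover have "\<theta> * k2 \<le> k2 * \<beta> / 4" "\<theta> * k2 \<le> k2"
    using \<theta> k2 mult_right_mono[of \<theta> "\<beta> / 4" k2] mult_right_mono[of \<theta> 1 k2] by simp_all
  then have "\<theta> * k2 \<le> 1/2"
    using k2 by linarith
  ultimately have "energy_weights \<gamma> \<beta> \<mu> m k1 k2 (\<theta> * k2)"
    using assms m \<theta> k1 k2 by unfold_locales auto
  then show ?thesis
    by (rule that)
qed

theorem theorem2p1:
  fixes \<gamma> \<beta> \<mu> :: real
  assumes "\<gamma> > 0" and "\<beta> > 0" and "\<mu> > 0"
  shows "\<exists>(\<E> :: real^3 \<Rightarrow> complex \<Rightarrow> complex^3 \<Rightarrow> complex^3 \<Rightarrow> complex^3 \<Rightarrow> real)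
            (c::real) (c'::real) (C1::real) (C2::real).
           c > 0 \<and> c' > 0 \<and> C1 > 0 \<and> C2 > 0 \<and>
           (\<forall>nh uh Eh Bh. fourier_system \<gamma> \<beta> \<mu> nh uh Eh Bh \<longrightarrow>
             (\<forall>t\<ge>0. \<forall>k.
               C1 * ((cmod (nh t k))\<^sup>2 + (norm (uh t k))\<^sup>2 + (norm (Eh t k))\<^sup>2 + (norm (Bh t k))\<^sup>2)
                 \<le> \<E> k (nh t k) (uh t k) (Eh t k) (Bh t k) \<and>
               \<E> k (nh t k) (uh t k) (Eh t k) (Bh t k)
                 \<le> C2 * ((cmod (nh t k))\<^sup>2 + (norm (uh t k))\<^sup>2 + (norm (Eh t k))\<^sup>2 + (norm (Bh t k))\<^sup>2) \<and>
               (\<exists>D. ((\<lambda>s. \<E> k (nh s k) (uh s k) (Eh s k) (Bh s k)) has_real_derivative D)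
                        (at t within {0..}) \<and>
                    D + c * (cmod (nh t k))\<^sup>2 + c * (norm k)\<^sup>2 * (norm (uh t k))\<^sup>2
                      + c * ((norm k)\<^sup>2 / (1 + (norm k)\<^sup>2)\<^sup>2) * (norm (Eh t k))\<^sup>2
                      + c * ((norm k)^4 / (1 + (norm k)\<^sup>2)^3) * (norm (Bh t k))\<^sup>2 \<le> 0 \<and>
                    D + c' * ((norm k)^4 / (1 + (norm k)\<^sup>2)^3)
                          * \<E> k (nh t k) (uh t k) (Eh t k) (Bh t k) \<le> 0)))"
proof -
  obtain m k1 k2 k3 where "energy_weights \<gamma> \<beta> \<mu> m k1 k2 k3"
    using energy_weights_exist assms by blast
  then interpret energy_weights \<gamma> \<beta> \<mu> m k1 k2 k3 .
  show ?thesis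
    by (rule exI[of _ "energy k1 k2 k3"], rule exI[of _ decay_rate], rule exI[of _ "decay_rate / 2"],
        rule exI[of _ "1/2"], rule exI[of _ 2])
      (use decay_rate_pos energy_estimates in auto)
qed

end
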